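(* Let $t\in\mathbb{R}$, $\mu>0$, $\sigma>0$ and $\lambda>(\mu-t)_-$. Let $\mathcal{L}_{S,\lambda}(\mu,\sigma)$ be the set of symmetric probability distributions $F$ on $\mathbb{R}$ with $\mathbb{E}^F[X]=\mu$, $\mathbb{E}^F[X^2]=\mu^2+\sigma^2$ and $\mathbb{E}^F[(X-t)_-]\le\lambda$, and let $\mathcal{L}_{6,S,\lambda}(\mu,\sigma)$ be the subset of $\mathcal{L}_{S,\lambda}(\mu,\sigma)$ consisting of six-point distributions. Then \[ \sup_{F\in\mathcal{L}_{S,\lambda}(\mu,\sigma)}\mathbb{E}^F[(X-t)_+^2]=\sup_{F\in\mathcal{L}_{6,S,\lambda}(\mu,\sigma)}\mathbb{E}^F[(X-t)_+^2], \] i.e., the two optimization problems are equivalent.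
   Context: For $x\in\mathbb{R}$, $(x)_+=\max\{x,0\}$, $(x)_-=\max\{-x,0\}$. A $k$-point distribution ($k\ge2$) is the law of a random variable $X$ with $\mathbb{P}(X=x_i)=p_i$, $i=1,\dots,k$, where $0\le p_i<1$ and $\sum_i p_i=1$ (so a $k$-point distribution may have fewer than $k$ atoms). A distribution of $X$ is symmetric if there is $a\in\mathbb{R}$ with $\mathbb{P}(X-a>x)=\mathbb{P}(X-a<-x)$ for all $x\in\mathbb{R}$. *)

theory Defs
  imports "HOL-Probability.Probability"
begin

definition pos_part :: "real \<Rightarrow> real" where "pos_part x = max x 0"
definition neg_part :: "real \<Rightarrow> real" where "neg_part x = max (- x) 0"

definition real_dist :: "real measure \<Rightarrow> bool" where
  "real_dist M \<longleftrightarrow> prob_space M \<and> sets M = sets borel"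

definition symmetric_dist :: "real measure \<Rightarrow> bool" where
  "symmetric_dist M \<longleftrightarrow> (\<exists>a. \<forall>x. measure M {y. y - a > x} = measure M {y. y - a < - x})"

definition k_point_dist :: "nat \<Rightarrow> real measure \<Rightarrow> bool" where
  "k_point_dist k M \<longleftrightarrow> (\<exists>(x::nat \<Rightarrow> real) (p::nat \<Rightarrow> real).
     inj_on x {..<k} \<and> (\<forall>i<k. 0 \<le> p i \<and> p i < 1) \<and> (\<Sum>i<k. p i) = 1 \<and>
     (\<forall>i<k. measure M {x i} = p i))"

definition L_S :: "real \<Rightarrow> real \<Rightarrow> real \<Rightarrow> real \<Rightarrow> real measure set" where
  "L_S t \<mu> \<sigma> lam = {M. real_dist M \<and> symmetric_dist M \<and>
      integrable M (\<lambda>x. x) \<and> integrable M (\<lambda>x. x ^ 2) \<and>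
      (\<integral>x. x \<partial>M) = \<mu> \<and> (\<integral>x. x ^ 2 \<partial>M) = \<mu> ^ 2 + \<sigma> ^ 2 \<and>
      (\<integral>x. neg_part (x - t) \<partial>M) \<le> lam}"

definition L6_S :: "real \<Rightarrow> real \<Rightarrow> real \<Rightarrow> real \<Rightarrow> real measure set" where
  "L6_S t \<mu> \<sigma> lam = {M \<in> L_S t \<mu> \<sigma> lam. k_point_dist 6 M}"

end

theory Submission
  imports Defs
begin

(* A symmetric law with mean mu is invariant under x |-> 2 mu - x, so E f(X) = E g(|X - mu|), where
   g is the even part of f about mu. For c = |t - mu| the even parts of x, x^2, (x - t)_- and
   (x - t)_+^2 are even quadratics on [0, c] and quadratics in y - c on [c, oo). Their
   expectations therefore depend only on five moments of Y = |X - mu|: P(Y < c), E[Y^2; Y < c],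
   P(Y >= c), E[Y - c; Y >= c] and E[(Y - c)^2; Y >= c]. A law of Y with one atom in [0, c], one
   at c and one in [c, oo) has the same five moments (Cauchy-Schwarz makes the outer pair of
   atoms possible), and its symmetrisation about mu is a six-point distribution in the same
   feasible set with the same objective value. *)

lemma real_dist_imp_real_distribution: "real_dist M \<Longrightarrow> real_distribution M"
  by (simp add: real_dist_def real_distribution_def real_distribution_axioms_def)

lemma k_point_distI:
  assumes M: "real_dist M" and S: "finite S" "card S \<le> k" "measure M S = 1"
    and no_full_atom: "\<And>z. measure M {z} < 1"
  shows "k_point_dist k M"
proof -
  interpret real_distribution M using M by (rule real_dist_imp_real_distribution)
  obtain B where B: "B \<subseteq> - S" "finite B" "card B = k - card S"
    using infinite_arbitrarily_large[of "- S"] S(1) infinite_UNIV_char_0[where 'a=real]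
    by (metis Compl_eq_Diff_UNIV Diff_infinite_finite)
  define T where "T = S \<union> B"
  have "S \<inter> B = {}" using B(1) by auto
  then have T: "finite T" "card T = k"
    using B S by (auto simp: T_def card_Un_disjoint)
  obtain h where h: "bij_betw h {..<k} T"
    using ex_bij_betw_nat_finite[OF T(1)] T(2) by (auto simp: lessThan_atLeast0)
  have T_sets: "T \<in> sets M" using T(1) by (simp add: finite_imp_closed)
  have "measure M S \<le> measure M T"
    using T_sets by (intro finite_measure_mono) (auto simp: T_def)
  then have "measure M T = 1" using S(3) prob_le_1[of T] by simp
  moreover have "measure M T = (\<Sum>y\<in>T. measure M {y})"
    using T(1) by (intro finite_measure_eq_sum_singleton) auto
  moreover have "\<dots> = (\<Sum>i<k. measure M {h i})"
    using sum.reindex_bij_betw[OF h, of "\<lambda>y. measure M {y}"] by simp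
  ultimately show ?thesis
    unfolding k_point_dist_def using h no_full_atom
    by (intro exI[of _ h] exI[of _ "\<lambda>i. measure M {h i}"]) (auto simp: bij_betw_def)
qed

lemma singleton_measure_less_one:
  assumes M: "real_dist M" and "integrable M (\<lambda>x. x)" "integrable M (\<lambda>x. x\<^sup>2)"
    and variance_pos: "(\<integral>x. x \<partial>M)\<^sup>2 < (\<integral>x. x\<^sup>2 \<partial>M)"
  shows "measure M {z} < 1"
proof (rule ccontr)
  interpret real_distribution M using M by (rule real_dist_imp_real_distribution)
  assume "\<not> measure M {z} < 1"
  then have ae: "AE x in M. x \<in> {z}"
    using prob_le_1[of "{z}"] by (intro AE_prob_1) auto
  have "(\<integral>x. x \<partial>M) = (\<integral>x. z \<partial>M)" "(\<integral>x. x\<^sup>2 \<partial>M) = (\<integral>x. z\<^sup>2 \<partial>M)"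
    using ae by (intro integral_cong_AE; auto)+
  then have "(\<integral>x. x \<partial>M) = z" "(\<integral>x. x\<^sup>2 \<partial>M) = z\<^sup>2"
    using prob_space by simp_all
  with variance_pos show False by simp
qed

(* The law of x I for an index I with P(I = i) = p i; indexing keeps coinciding atoms apart. *)
definition finite_dist :: "nat \<Rightarrow> (nat \<Rightarrow> real) \<Rightarrow> (nat \<Rightarrow> real) \<Rightarrow> real measure" where
  "finite_dist n x p = distr (measure_pmf (pmf_of_list (map (\<lambda>i. (i, p i)) [0..<n]))) borel x"

lemma sets_finite_dist [simp, measurable_cong]: "sets (finite_dist n x p) = sets borel"
  by (simp add: finite_dist_def)

lemma real_dist_finite_dist: "real_dist (finite_dist n x p)"
  unfolding finite_dist_def real_dist_def
  by (auto intro!: prob_space.prob_space_distr prob_space_measure_pmf)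

context
  fixes n :: nat and p :: "nat \<Rightarrow> real"
  assumes nonneg: "\<And>i. i < n \<Longrightarrow> 0 \<le> p i" and sum_one: "(\<Sum>i<n. p i) = 1"
begin

private lemma index_pmf_wf: "pmf_of_list_wf (map (\<lambda>i. (i, p i)) [0..<n])"
  using nonneg sum_one by (auto simp: pmf_of_list_wf_def sum_list_sum_nth lessThan_atLeast0)

private lemma pmf_index: "pmf (pmf_of_list (map (\<lambda>i. (i, p i)) [0..<n])) i
    = (if i < n then p i else 0)"
  using index_pmf_wf
  by (simp add: pmf_pmf_of_list filter_map o_def sum_list_map_filter' sum_list_distinct_conv_sum_set
      lessThan_atLeast0[symmetric])

lemma integral_finite_dist:
  fixes f :: "real \<Rightarrow> real"
  assumes "f \<in> borel_measurable borel"
  shows "(\<integral>z. f z \<partial>finite_dist n x p) = (\<Sum>i<n. p i * f (x i))"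
proof -
  have "(\<integral>z. f z \<partial>finite_dist n x p) = (\<integral>i. f (x i) \<partial>pmf_of_list (map (\<lambda>i. (i, p i)) [0..<n]))"
    using assms by (simp add: finite_dist_def integral_distr)
  also have "\<dots> = (\<Sum>i<n. f (x i) * p i)"
    by (subst integral_measure_pmf_real[where A = "{..<n}"])
       (auto simp: set_pmf_eq pmf_index split: if_splits)
  finally show ?thesis by (simp add: mult.commute)
qed

lemma integrable_finite_dist:
  fixes f :: "real \<Rightarrow> real"
  assumes "f \<in> borel_measurable borel"
  shows "integrable (finite_dist n x p) f"
proof -
  let ?P = "pmf_of_list (map (\<lambda>i. (i, p i)) [0..<n])"
  have "integrable (measure_pmf ?P) (\<lambda>i. f (x i))"
    by (intro integrable_measure_pmf_finite finite_set_pmf_of_list index_pmf_wf)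
  then show ?thesis
    using integrable_distr_eq[of x "measure_pmf ?P" borel f] assms by (simp add: finite_dist_def)
qed

lemma measure_finite_dist:
  assumes "A \<in> sets borel"
  shows "measure (finite_dist n x p) A = (\<Sum>i<n. p i * indicator A (x i))"
  using integral_finite_dist[of "indicator A" x] assms by simp

lemma k_point_dist_finite_dist:
  assumes "\<And>z. measure (finite_dist n x p) {z} < 1"
  shows "k_point_dist n (finite_dist n x p)"
proof (rule k_point_distI[OF real_dist_finite_dist])
  show "finite (x ` {..<n})" "card (x ` {..<n}) \<le> n"
    using card_image_le[of "{..<n}" x] by auto
  show "measure (finite_dist n x p) (x ` {..<n}) = 1"
    using sum_one by (simp add: measure_finite_dist finite_imp_closed)
qed (use assms in blast)

end

definition even_part :: "real \<Rightarrow> (real \<Rightarrow> real) \<Rightarrow> real \<Rightarrow> real" where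
  "even_part \<mu> f y = (f (\<mu> + y) + f (\<mu> - y)) / 2"

lemma even_part_abs: "even_part \<mu> f \<bar>x - \<mu>\<bar> = (f x + f (2 * \<mu> - x)) / 2"
  by (cases "x \<le> \<mu>") (simp_all add: even_part_def abs_if add.commute)

definition sym_finite_dist :: "real \<Rightarrow> nat \<Rightarrow> (nat \<Rightarrow> real) \<Rightarrow> (nat \<Rightarrow> real) \<Rightarrow> real measure" where
  "sym_finite_dist \<mu> n r w =
     finite_dist (2 * n) (\<lambda>i. if even i then \<mu> + r (i div 2) else \<mu> - r (i div 2))
       (\<lambda>i. w (i div 2) / 2)"

lemma sum_lessThan_double: "(\<Sum>i<2 * n. g i) = (\<Sum>j<n. g (2 * j) + g (2 * j + 1))"
  for g :: "nat \<Rightarrow> 'a::comm_monoid_add"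
  by (induction n) (simp_all add: ac_simps)

context
  fixes n :: nat and w :: "nat \<Rightarrow> real"
  assumes nonneg: "\<And>j. j < n \<Longrightarrow> 0 \<le> w j" and sum_one: "(\<Sum>j<n. w j) = 1"
begin

private lemma halved_weights:
  "\<And>i. i < 2 * n \<Longrightarrow> 0 \<le> w (i div 2) / 2" "(\<Sum>i<2 * n. w (i div 2) / 2) = 1"
  using nonneg sum_one by (auto simp: sum_lessThan_double)

lemma integral_sym_finite_dist:
  fixes f :: "real \<Rightarrow> real"
  assumes "f \<in> borel_measurable borel"
  shows "(\<integral>z. f z \<partial>sym_finite_dist \<mu> n r w) = (\<Sum>j<n. w j * even_part \<mu> f (r j))"
proof -
  have "(\<integral>z. f z \<partial>sym_finite_dist \<mu> n r w)
      = (\<Sum>i<2 * n. w (i div 2) / 2 * f (if even i then \<mu> + r (i div 2) else \<mu> - r (i div 2)))"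
    unfolding sym_finite_dist_def by (rule integral_finite_dist) (use halved_weights assms in auto)
  also have "\<dots> = (\<Sum>j<n. w j * even_part \<mu> f (r j))"
    by (simp only: sum_lessThan_double) (simp add: even_part_def algebra_simps add_divide_distrib)
  finally show ?thesis .
qed

lemma measure_sym_finite_dist:
  assumes "A \<in> sets borel"
  shows "measure (sym_finite_dist \<mu> n r w) A = (\<Sum>j<n. w j * even_part \<mu> (indicator A) (r j))"
  using integral_sym_finite_dist[of "indicator A" \<mu> r] assms by (simp add: sym_finite_dist_def)

lemma integrable_sym_finite_dist:
  fixes f :: "real \<Rightarrow> real"
  assumes "f \<in> borel_measurable borel"
  shows "integrable (sym_finite_dist \<mu> n r w) f"
  unfolding sym_finite_dist_def by (rule integrable_finite_dist) (use halved_weights assms in auto)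

lemma symmetric_dist_sym_finite_dist: "symmetric_dist (sym_finite_dist \<mu> n r w)"
  unfolding symmetric_dist_def
proof (intro exI allI)
  fix x
  have "even_part \<mu> (indicator {y. y - \<mu> > x}) s = even_part \<mu> (indicator {y. y - \<mu> < - x}) s" for s
    by (simp add: even_part_def indicator_def add.commute)
  moreover have "{y. y - \<mu> > x} \<in> sets borel" "{y. y - \<mu> < - x} \<in> sets borel"
    by measurable
  ultimately show "measure (sym_finite_dist \<mu> n r w) {y. y - \<mu> > x}
      = measure (sym_finite_dist \<mu> n r w) {y. y - \<mu> < - x}"
    by (simp add: measure_sym_finite_dist)
qed

lemma k_point_dist_sym_finite_dist:
  assumes "\<And>z. measure (sym_finite_dist \<mu> n r w) {z} < 1"
  shows "k_point_dist (2 * n) (sym_finite_dist \<mu> n r w)"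
  unfolding sym_finite_dist_def by (rule k_point_dist_finite_dist)
     (use halved_weights assms[unfolded sym_finite_dist_def] in auto)

end

lemma real_dist_sym_finite_dist: "real_dist (sym_finite_dist \<mu> n r w)"
  unfolding sym_finite_dist_def by (rule real_dist_finite_dist)

lemma symmetric_dist_reflection:
  assumes M: "real_dist M" and "symmetric_dist M"
  obtains a where "distr M borel (\<lambda>x. 2 * a - x) = M"
proof -
  interpret real_distribution M using M by (rule real_dist_imp_real_distribution)
  obtain a where a: "\<And>x. measure M {y. y - a > x} = measure M {y. y - a < - x}"
    using assms(2) by (auto simp: symmetric_dist_def)
  let ?R = "distr M borel (\<lambda>x. 2 * a - x)"
  have "?R = M"
  proof (rule cdf_unique)
    show "real_distribution ?R" by (rule real_distribution_distr) simp
    show "real_distribution M" ..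
    show "cdf ?R = cdf M"
    proof
      fix x
      have "cdf ?R x = measure M ((\<lambda>y. 2 * a - y) -` {..x} \<inter> space M)"
        unfolding cdf_def by (rule measure_distr) simp_all
      also have "(\<lambda>y. 2 * a - y) -` {..x} \<inter> space M = space M - {y. y - a < - (x - a)}"
        by auto
      also have "measure M (space M - {y. y - a < - (x - a)})
          = 1 - measure M {y. y - a < - (x - a)}"
        by (rule prob_compl) measurable
      also have "measure M {y. y - a < - (x - a)} = measure M {y. y - a > x - a}"
        using a[of "x - a"] by simp
      also have "{y. y - a > x - a} = space M - {..x}"
        by auto
      finally show "cdf ?R x = cdf M x"
        unfolding cdf_def using prob_compl[of "{..x}"] by simp
    qed
  qed
  then show ?thesis by (rule that)
qed

lemma reflection_center_eq_mean:
  assumes M: "real_dist M" and reflection: "distr M borel (\<lambda>x. 2 * a - x) = M"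
    and "integrable M (\<lambda>x. x)"
  shows "a = (\<integral>x. x \<partial>M)"
proof -
  interpret real_distribution M using M by (rule real_dist_imp_real_distribution)
  have "(\<integral>x. x \<partial>M) = (\<integral>x. 2 * a - x \<partial>M)"
    by (subst (1) reflection[symmetric]) (simp add: integral_distr)
  also have "\<dots> = 2 * a - (\<integral>x. x \<partial>M)"
    using assms(3) prob_space by simp
  finally show ?thesis by simp
qed

lemma integral_even_part:
  fixes f :: "real \<Rightarrow> real"
  assumes M: "real_dist M" and reflection: "distr M borel (\<lambda>x. 2 * \<mu> - x) = M"
    and f: "f \<in> borel_measurable borel" "integrable M f"
  shows "(\<integral>x. f x \<partial>M) = (\<integral>x. even_part \<mu> f \<bar>x - \<mu>\<bar> \<partial>M)"
proof -
  interpret real_distribution M using M by (rule real_dist_imp_real_distribution)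
  have "integrable M (\<lambda>x. f (2 * \<mu> - x))"
    using f integrable_distr_eq[of "\<lambda>x. 2 * \<mu> - x" M borel f] reflection by simp
  moreover have "(\<integral>x. f (2 * \<mu> - x) \<partial>M) = (\<integral>x. f x \<partial>M)"
    using f integral_distr[of "\<lambda>x. 2 * \<mu> - x" M borel f] reflection by simp
  ultimately show ?thesis
    using f by (simp add: even_part_abs)
qed

definition split_quadratic :: "real \<Rightarrow> (real \<Rightarrow> real) \<Rightarrow> bool" where
  "split_quadratic c g \<longleftrightarrow> (\<exists>\<alpha> \<beta> \<gamma>\<^sub>0 \<gamma>\<^sub>1 \<gamma>\<^sub>2.
     (\<forall>y. 0 \<le> y \<and> y \<le> c \<longrightarrow> g y = \<alpha> + \<beta> * y\<^sup>2) \<and>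
     (\<forall>y. c \<le> y \<longrightarrow> g y = \<gamma>\<^sub>0 + \<gamma>\<^sub>1 * (y - c) + \<gamma>\<^sub>2 * (y - c)\<^sup>2))"

definition piecewise_quadratic :: "real \<Rightarrow> real \<Rightarrow> real \<Rightarrow> real \<Rightarrow> real \<Rightarrow> real \<Rightarrow> real \<Rightarrow> real" where
  "piecewise_quadratic c \<alpha> \<beta> \<gamma>\<^sub>0 \<gamma>\<^sub>1 \<gamma>\<^sub>2 y =
     (if y < c then \<alpha> + \<beta> * y\<^sup>2 else \<gamma>\<^sub>0 + \<gamma>\<^sub>1 * (y - c) + \<gamma>\<^sub>2 * (y - c)\<^sup>2)"

lemma split_quadratic_decomposition:
  assumes "split_quadratic c g"
  obtains \<alpha> \<beta> \<gamma>\<^sub>0 \<gamma>\<^sub>1 \<gamma>\<^sub>2 where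
    "\<And>y. 0 \<le> y \<Longrightarrow> g y = piecewise_quadratic c \<alpha> \<beta> \<gamma>\<^sub>0 \<gamma>\<^sub>1 \<gamma>\<^sub>2 y"
    "\<And>a. 0 \<le> a \<Longrightarrow> a \<le> c \<Longrightarrow> g a = \<alpha> + \<beta> * a\<^sup>2"
    "\<And>z. 0 \<le> z \<Longrightarrow> g (c + z) = \<gamma>\<^sub>0 + \<gamma>\<^sub>1 * z + \<gamma>\<^sub>2 * z\<^sup>2"
proof -
  obtain \<alpha> \<beta> \<gamma>\<^sub>0 \<gamma>\<^sub>1 \<gamma>\<^sub>2 where
    inner: "\<And>y. 0 \<le> y \<Longrightarrow> y \<le> c \<Longrightarrow> g y = \<alpha> + \<beta> * y\<^sup>2" and
    outer: "\<And>y. c \<le> y \<Longrightarrow> g y = \<gamma>\<^sub>0 + \<gamma>\<^sub>1 * (y - c) + \<gamma>\<^sub>2 * (y - c)\<^sup>2"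
    using assms by (auto simp: split_quadratic_def)
  show ?thesis
    by (rule that[of \<alpha> \<beta> \<gamma>\<^sub>0 \<gamma>\<^sub>1 \<gamma>\<^sub>2]) (use inner outer in \<open>auto simp: piecewise_quadratic_def\<close>)
qed

lemma point_with_second_moment:
  fixes q A c :: real
  assumes "0 \<le> q" "0 \<le> A" "A \<le> c\<^sup>2 * q" "0 \<le> c"
  obtains a where "0 \<le> a" "a \<le> c" "q * a\<^sup>2 = A"
proof (cases "q = 0")
  case True
  then show ?thesis using assms by (intro that[of 0]) auto
next
  case False
  then have "A / q \<le> c\<^sup>2" "0 \<le> A / q"
    using assms by (simp_all add: divide_le_eq mult.commute)
  then show ?thesis
    using False assms by (intro that[of "sqrt (A / q)"]) (auto intro: real_le_lsqrt)
qed

lemma discriminant_le_of_quadratic_nonneg: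
  fixes p d e :: real
  assumes "0 \<le> p" and nonneg: "\<And>r. 0 \<le> e - 2 * r * d + r\<^sup>2 * p"
  shows "d\<^sup>2 \<le> p * e"
proof (cases "p = 0")
  case True
  have "d = 0"
  proof (rule ccontr)
    assume "d \<noteq> 0"
    then have "e - 2 * ((e + 1) / (2 * d)) * d + ((e + 1) / (2 * d))\<^sup>2 * p = -1"
      using True by (simp add: field_simps)
    with nonneg show False by (metis neg_0_le_iff_le not_one_le_zero)
  qed
  then show ?thesis using True by simp
next
  case False
  have "0 \<le> e - 2 * (d / p) * d + (d / p)\<^sup>2 * p" by (rule nonneg)
  also have "\<dots> = (p * e - d\<^sup>2) / p"
    using False by (simp add: field_simps power2_eq_square)
  finally show ?thesis
    using False assms(1) by (simp add: zero_le_divide_iff)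
qed

lemma two_point_with_moments:
  fixes p d e :: real
  assumes "0 \<le> p" "0 \<le> d" "d\<^sup>2 \<le> p * e" "d = 0 \<Longrightarrow> e = 0"
  obtains u v z where "0 \<le> u" "0 \<le> v" "0 \<le> z" "u + v = p" "v * z = d" "v * z\<^sup>2 = e"
proof (cases "d = 0")
  case True
  then show ?thesis using assms by (intro that[of p 0 0]) auto
next
  case False
  then have "0 < d\<^sup>2" "0 < d" using assms(2) by auto
  then have "0 < e"
    using assms(1,3) by (smt (verit) mult_nonneg_nonpos)
  then have "d\<^sup>2 / e \<le> p" using assms(3) by (simp add: divide_le_eq mult.commute)
  with \<open>0 < d\<close> \<open>0 < e\<close> show ?thesis
    by (intro that[of "p - d\<^sup>2 / e" "d\<^sup>2 / e" "e / d"]) (simp_all add: field_simps power2_eq_square)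
qed

lemma (in prob_space) Cauchy_Schwarz_expectation_indicator:
  fixes Z J :: "'a \<Rightarrow> real"
  assumes Z: "integrable M Z" "integrable M (\<lambda>x. (Z x)\<^sup>2)" and J: "integrable M J"
    and J_01: "\<And>x. x \<in> space M \<Longrightarrow> J x = 0 \<or> J x = 1"
    and Z_J: "\<And>x. x \<in> space M \<Longrightarrow> Z x = Z x * J x"
  shows "(expectation Z)\<^sup>2 \<le> expectation J * expectation (\<lambda>x. (Z x)\<^sup>2)"
proof (rule discriminant_le_of_quadratic_nonneg)
  show "0 \<le> expectation J"
    using J_01 by (intro integral_nonneg_AE AE_I2) (metis order.refl zero_le_one)
  fix r
  have "0 \<le> expectation (\<lambda>x. (Z x - r * J x)\<^sup>2)"
    by (rule Bochner_Integration.integral_nonneg) simp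
  also have "expectation (\<lambda>x. (Z x - r * J x)\<^sup>2)
      = expectation (\<lambda>x. (Z x)\<^sup>2 - 2 * r * Z x + r\<^sup>2 * J x)"
  proof (rule Bochner_Integration.integral_cong)
    fix x assume "x \<in> space M"
    with J_01[of x] Z_J[of x] show "(Z x - r * J x)\<^sup>2 = (Z x)\<^sup>2 - 2 * r * Z x + r\<^sup>2 * J x"
      by (auto simp: power2_diff power_mult_distrib)
  qed simp
  also have "\<dots> = expectation (\<lambda>x. (Z x)\<^sup>2) - 2 * r * expectation Z + r\<^sup>2 * expectation J"
    using Z J by simp
  finally show "0 \<le> expectation (\<lambda>x. (Z x)\<^sup>2) - 2 * r * expectation Z + r\<^sup>2 * expectation J" .
qed

lemma (in prob_space) expectation_square_eq_0_of_nonneg: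
  fixes Z :: "'a \<Rightarrow> real"
  assumes "integrable M Z" "\<And>x. x \<in> space M \<Longrightarrow> 0 \<le> Z x" "expectation Z = 0"
  shows "expectation (\<lambda>x. (Z x)\<^sup>2) = 0"
proof -
  have "AE x in M. Z x = 0"
    using assms integral_nonneg_eq_0_iff_AE[of M Z] by (auto intro: AE_I2)
  then show ?thesis
    by (intro integral_eq_zero_AE) auto
qed

lemma (in prob_space) split_moments:
  fixes Y :: "'a \<Rightarrow> real"
  assumes Y[measurable]: "Y \<in> borel_measurable M" and Y_nonneg: "\<And>x. x \<in> space M \<Longrightarrow> 0 \<le> Y x"
    and Y_sq: "integrable M (\<lambda>x. (Y x)\<^sup>2)" and c: "0 \<le> c"
  obtains q A p d e where "0 \<le> q" "0 \<le> A" "A \<le> c\<^sup>2 * q" "0 \<le> p" "q + p = 1"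
    "0 \<le> d" "d\<^sup>2 \<le> p * e" "d = 0 \<Longrightarrow> e = 0"
    "\<And>\<alpha> \<beta> \<gamma>\<^sub>0 \<gamma>\<^sub>1 \<gamma>\<^sub>2. expectation (\<lambda>x. piecewise_quadratic c \<alpha> \<beta> \<gamma>\<^sub>0 \<gamma>\<^sub>1 \<gamma>\<^sub>2 (Y x))
       = \<alpha> * q + \<beta> * A + \<gamma>\<^sub>0 * p + \<gamma>\<^sub>1 * d + \<gamma>\<^sub>2 * e"
proof -
  define I :: "'a \<Rightarrow> real" where "I x = of_bool (Y x < c)" for x
  define J :: "'a \<Rightarrow> real" where "J x = of_bool (c \<le> Y x)" for x
  define Z where "Z x = (Y x - c) * J x" for x
  have [measurable]: "I \<in> borel_measurable M" "J \<in> borel_measurable M" "Z \<in> borel_measurable M"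
    unfolding I_def J_def Z_def by measurable
  have Y_int: "integrable M Y"
    using Y Y_sq by (rule square_integrable_imp_integrable)
  have Z_bounds: "0 \<le> Z x" "Z x \<le> Y x" if "x \<in> space M" for x
    using Y_nonneg[OF that] c by (auto simp: Z_def J_def)
  have I_int: "integrable M I" and J_int: "integrable M J"
    by (auto intro!: integrable_const_bound[where B = 1] simp: I_def J_def)
  have A_int: "integrable M (\<lambda>x. (Y x)\<^sup>2 * I x)"
    by (rule Bochner_Integration.integrable_bound[OF Y_sq]) (auto intro!: AE_I2 simp: I_def)
  have Z_int: "integrable M Z"
    by (rule Bochner_Integration.integrable_bound[OF Y_int])
       (auto intro!: AE_I2 simp: Z_bounds Y_nonneg)
  have Z_sq_int: "integrable M (\<lambda>x. (Z x)\<^sup>2)"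
    by (rule Bochner_Integration.integrable_bound[OF Y_sq])
       (auto intro!: AE_I2 power_mono simp: Z_bounds)
  show ?thesis
  proof (rule that[of "expectation I" "expectation (\<lambda>x. (Y x)\<^sup>2 * I x)" "expectation J"
        "expectation Z" "expectation (\<lambda>x. (Z x)\<^sup>2)"])
    show "0 \<le> expectation I" "0 \<le> expectation (\<lambda>x. (Y x)\<^sup>2 * I x)" "0 \<le> expectation J"
      "0 \<le> expectation Z"
      by (auto intro!: Bochner_Integration.integral_nonneg simp: I_def J_def Z_bounds)
    have "expectation (\<lambda>x. (Y x)\<^sup>2 * I x) \<le> expectation (\<lambda>x. c\<^sup>2 * I x)"
    proof (rule integral_mono[OF A_int])
      show "integrable M (\<lambda>x. c\<^sup>2 * I x)" using I_int by simp
      show "(Y x)\<^sup>2 * I x \<le> c\<^sup>2 * I x" if "x \<in> space M" for x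
        using Y_nonneg[OF that] c by (auto simp: I_def intro!: power_mono)
    qed
    then show "expectation (\<lambda>x. (Y x)\<^sup>2 * I x) \<le> c\<^sup>2 * expectation I" by simp
    have "expectation I + expectation J = expectation (\<lambda>x. I x + J x)"
      using I_int J_int by simp
    also have "\<dots> = expectation (\<lambda>x. 1)"
      by (rule Bochner_Integration.integral_cong) (auto simp: I_def J_def)
    finally show "expectation I + expectation J = 1"
      using prob_space by simp
    show "(expectation Z)\<^sup>2 \<le> expectation J * expectation (\<lambda>x. (Z x)\<^sup>2)"
      by (rule Cauchy_Schwarz_expectation_indicator[OF Z_int Z_sq_int J_int])
         (auto simp: J_def Z_def)
    show "expectation Z = 0 \<Longrightarrow> expectation (\<lambda>x. (Z x)\<^sup>2) = 0"
      using Z_int Z_bounds by (intro expectation_square_eq_0_of_nonneg)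
    fix \<alpha> \<beta> \<gamma>\<^sub>0 \<gamma>\<^sub>1 \<gamma>\<^sub>2
    have "expectation (\<lambda>x. piecewise_quadratic c \<alpha> \<beta> \<gamma>\<^sub>0 \<gamma>\<^sub>1 \<gamma>\<^sub>2 (Y x))
        = expectation (\<lambda>x. \<alpha> * I x + \<beta> * ((Y x)\<^sup>2 * I x) + \<gamma>\<^sub>0 * J x + \<gamma>\<^sub>1 * Z x + \<gamma>\<^sub>2 * (Z x)\<^sup>2)"
      by (rule Bochner_Integration.integral_cong)
         (simp_all add: piecewise_quadratic_def I_def J_def Z_def)
    also have "\<dots> = \<alpha> * expectation I + \<beta> * expectation (\<lambda>x. (Y x)\<^sup>2 * I x) + \<gamma>\<^sub>0 * expectation J
        + \<gamma>\<^sub>1 * expectation Z + \<gamma>\<^sub>2 * expectation (\<lambda>x. (Z x)\<^sup>2)"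
      using I_int A_int J_int Z_int Z_sq_int by simp
    finally show "expectation (\<lambda>x. piecewise_quadratic c \<alpha> \<beta> \<gamma>\<^sub>0 \<gamma>\<^sub>1 \<gamma>\<^sub>2 (Y x))
        = \<alpha> * expectation I + \<beta> * expectation (\<lambda>x. (Y x)\<^sup>2 * I x) + \<gamma>\<^sub>0 * expectation J
          + \<gamma>\<^sub>1 * expectation Z + \<gamma>\<^sub>2 * expectation (\<lambda>x. (Z x)\<^sup>2)" .
  qed
qed

lemma (in prob_space) split_quadratic_three_point_matching:
  fixes Y :: "'a \<Rightarrow> real"
  assumes Y: "Y \<in> borel_measurable M" and Y_nonneg: "\<And>x. x \<in> space M \<Longrightarrow> 0 \<le> Y x"
    and Y_sq: "integrable M (\<lambda>x. (Y x)\<^sup>2)" and c: "0 \<le> c"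
  obtains q u v a z where "0 \<le> q" "0 \<le> u" "0 \<le> v" "q + u + v = 1" "0 \<le> a" "a \<le> c" "0 \<le> z"
    "\<And>g. split_quadratic c g \<Longrightarrow> expectation (\<lambda>x. g (Y x)) = q * g a + u * g c + v * g (c + z)"
proof (rule split_moments[OF Y Y_nonneg Y_sq c])
  fix q A p d e
  assume q: "0 \<le> q" "0 \<le> A" "A \<le> c\<^sup>2 * q" and p: "0 \<le> p" "q + p = 1"
    and d: "0 \<le> d" "d\<^sup>2 \<le> p * e" "d = 0 \<Longrightarrow> e = 0"
    and moments: "\<And>\<alpha> \<beta> \<gamma>\<^sub>0 \<gamma>\<^sub>1 \<gamma>\<^sub>2. expectation (\<lambda>x. piecewise_quadratic c \<alpha> \<beta> \<gamma>\<^sub>0 \<gamma>\<^sub>1 \<gamma>\<^sub>2 (Y x))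
      = \<alpha> * q + \<beta> * A + \<gamma>\<^sub>0 * p + \<gamma>\<^sub>1 * d + \<gamma>\<^sub>2 * e"
  obtain a where a: "0 \<le> a" "a \<le> c" "q * a\<^sup>2 = A"
    using point_with_second_moment[OF q c] .
  obtain u v z where uvz: "0 \<le> u" "0 \<le> v" "0 \<le> z" "u + v = p" "v * z = d" "v * z\<^sup>2 = e"
    using two_point_with_moments[OF p(1) d] .
  show thesis
  proof (rule that[OF q(1) uvz(1,2) _ a(1,2) uvz(3)])
    show "q + u + v = 1" using p(2) uvz(4) by simp
    fix g assume "split_quadratic c g"
    then obtain \<alpha> \<beta> \<gamma>\<^sub>0 \<gamma>\<^sub>1 \<gamma>\<^sub>2
      where g: "\<And>y. 0 \<le> y \<Longrightarrow> g y = piecewise_quadratic c \<alpha> \<beta> \<gamma>\<^sub>0 \<gamma>\<^sub>1 \<gamma>\<^sub>2 y"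
      and g_inner: "\<And>a. 0 \<le> a \<Longrightarrow> a \<le> c \<Longrightarrow> g a = \<alpha> + \<beta> * a\<^sup>2"
      and g_outer: "\<And>z. 0 \<le> z \<Longrightarrow> g (c + z) = \<gamma>\<^sub>0 + \<gamma>\<^sub>1 * z + \<gamma>\<^sub>2 * z\<^sup>2"
      by (rule split_quadratic_decomposition) blast
    have "expectation (\<lambda>x. g (Y x)) = expectation (\<lambda>x. piecewise_quadratic c \<alpha> \<beta> \<gamma>\<^sub>0 \<gamma>\<^sub>1 \<gamma>\<^sub>2 (Y x))"
      by (rule Bochner_Integration.integral_cong) (simp_all add: g Y_nonneg)
    also have "\<dots> = \<alpha> * q + \<beta> * A + \<gamma>\<^sub>0 * p + \<gamma>\<^sub>1 * d + \<gamma>\<^sub>2 * e"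
      by (rule moments)
    also have "\<dots> = q * (\<alpha> + \<beta> * a\<^sup>2) + u * \<gamma>\<^sub>0 + v * (\<gamma>\<^sub>0 + \<gamma>\<^sub>1 * z + \<gamma>\<^sub>2 * z\<^sup>2)"
      unfolding a(3)[symmetric] uvz(4-6)[symmetric] by (simp add: algebra_simps)
    also have "\<dots> = q * g a + u * g c + v * g (c + z)"
      using g_inner[OF a(1,2)] g_outer[OF uvz(3)] g_outer[of 0] by simp
    finally show "expectation (\<lambda>x. g (Y x)) = q * g a + u * g c + v * g (c + z)" .
  qed
qed

lemma split_quadratic_even_quadratic: "split_quadratic c (\<lambda>y. \<alpha> + \<beta> * y\<^sup>2)"
  unfolding split_quadratic_def
  by (rule exI[of _ \<alpha>], rule exI[of _ \<beta>], rule exI[of _ "\<alpha> + \<beta> * c\<^sup>2"], rule exI[of _ "2 * \<beta> * c"],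
      rule exI[of _ \<beta>]) (simp add: power2_eq_square algebra_simps)

lemma even_part_id: "even_part \<mu> (\<lambda>x. x) = (\<lambda>y. \<mu>)"
  by (simp add: even_part_def fun_eq_iff)

lemma even_part_square: "even_part \<mu> (\<lambda>x. x\<^sup>2) = (\<lambda>y. \<mu>\<^sup>2 + y\<^sup>2)"
  by (simp add: even_part_def fun_eq_iff power2_eq_square algebra_simps)

lemma split_quadratic_neg_part: "split_quadratic \<bar>t - \<mu>\<bar> (even_part \<mu> (\<lambda>x. neg_part (x - t)))"
  unfolding split_quadratic_def
proof (intro exI conjI allI impI)
  let ?s = "t - \<mu>"
  show "even_part \<mu> (\<lambda>x. neg_part (x - t)) y = max ?s 0 + 0 * y\<^sup>2" if "0 \<le> y \<and> y \<le> \<bar>?s\<bar>" for y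
    using that by (auto simp: even_part_def neg_part_def max_def abs_if split: if_splits)
  show "even_part \<mu> (\<lambda>x. neg_part (x - t)) y
      = (\<bar>?s\<bar> + ?s) / 2 + 1 / 2 * (y - \<bar>?s\<bar>) + 0 * (y - \<bar>?s\<bar>)\<^sup>2"
    if "\<bar>?s\<bar> \<le> y" for y
    using that
      by (auto simp: even_part_def neg_part_def max_def abs_if field_simps split: if_splits)
qed

lemma split_quadratic_pos_part_square:
  "split_quadratic \<bar>t - \<mu>\<bar> (even_part \<mu> (\<lambda>x. (pos_part (x - t))\<^sup>2))"
  unfolding split_quadratic_def
proof (intro exI conjI allI impI)
  let ?s = "t - \<mu>"
  show "even_part \<mu> (\<lambda>x. (pos_part (x - t))\<^sup>2) y = (neg_part ?s)\<^sup>2 + of_bool (?s < 0) * y\<^sup>2"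
    if "0 \<le> y \<and> y \<le> \<bar>?s\<bar>" for y
    using that
    by (auto simp: even_part_def neg_part_def pos_part_def max_def abs_if power2_eq_square
        field_simps split: if_splits)
  show "even_part \<mu> (\<lambda>x. (pos_part (x - t))\<^sup>2) y
      = (\<bar>?s\<bar> - ?s)\<^sup>2 / 2 + (\<bar>?s\<bar> - ?s) * (y - \<bar>?s\<bar>) + 1 / 2 * (y - \<bar>?s\<bar>)\<^sup>2"
    if "\<bar>?s\<bar> \<le> y" for y
    using that
    by (auto simp: even_part_def pos_part_def max_def abs_if power2_eq_square field_simps
        split: if_splits)
qed

lemma symmetric_dist_six_point_matching:
  assumes M: "real_dist M" "symmetric_dist M"
    and moments: "integrable M (\<lambda>x. x)" "integrable M (\<lambda>x. x\<^sup>2)"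
    and mean: "(\<integral>x. x \<partial>M) = \<mu>" and c: "0 \<le> c"
  obtains w r where "\<And>j. j < 3 \<Longrightarrow> 0 \<le> w j" "(\<Sum>j<3. w j) = 1"
    "\<And>f. f \<in> borel_measurable borel \<Longrightarrow> integrable M f \<Longrightarrow> split_quadratic c (even_part \<mu> f) \<Longrightarrow>
       (\<integral>x. f x \<partial>sym_finite_dist \<mu> 3 r w) = (\<integral>x. f x \<partial>M)"
proof -
  interpret real_distribution M using M(1) by (rule real_dist_imp_real_distribution)
  obtain a where "distr M borel (\<lambda>x. 2 * a - x) = M"
    using symmetric_dist_reflection[OF M] .
  moreover from this have "a = \<mu>"
    using reflection_center_eq_mean[OF M(1) _ moments(1)] mean by simp
  ultimately have reflection: "distr M borel (\<lambda>x. 2 * \<mu> - x) = M" by simp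
  have Y_meas: "(\<lambda>x. \<bar>x - \<mu>\<bar>) \<in> borel_measurable M"
    by measurable
  have Y_sq: "integrable M (\<lambda>x. \<bar>x - \<mu>\<bar>\<^sup>2)"
    using moments by (simp add: power2_diff)
  obtain q u v b z where weights: "0 \<le> q" "0 \<le> u" "0 \<le> v" "q + u + v = 1"
    and matching: "\<And>g. split_quadratic c g \<Longrightarrow>
      expectation (\<lambda>x. g \<bar>x - \<mu>\<bar>) = q * g b + u * g c + v * g (c + z)"
    by (rule split_quadratic_three_point_matching[OF Y_meas _ Y_sq c]) auto
  define r where "r j = [b, c, c + z] ! j" for j
  define w where "w j = [q, u, v] ! j" for j
  show ?thesis
  proof (rule that[of w r])
    show "0 \<le> w j" if "j < 3" for j
      using that weights by (auto simp: w_def less_Suc_eq numeral_3_eq_3)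
    show sum_w: "(\<Sum>j<3. w j) = 1"
      using weights by (simp add: w_def numeral_3_eq_3)
    fix f :: "real \<Rightarrow> real"
    assume f: "f \<in> borel_measurable borel" "integrable M f" "split_quadratic c (even_part \<mu> f)"
    have "(\<integral>x. f x \<partial>sym_finite_dist \<mu> 3 r w) = (\<Sum>j<3. w j * even_part \<mu> f (r j))"
      by (rule integral_sym_finite_dist)
         (use weights sum_w f in \<open>auto simp: w_def less_Suc_eq numeral_3_eq_3\<close>)
    also have "\<dots> = q * even_part \<mu> f b + u * even_part \<mu> f c + v * even_part \<mu> f (c + z)"
      by (simp add: w_def r_def numeral_3_eq_3)
    also have "\<dots> = (\<integral>x. even_part \<mu> f \<bar>x - \<mu>\<bar> \<partial>M)"
      using matching[OF f(3)] by simp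
    also have "\<dots> = (\<integral>x. f x \<partial>M)"
      using integral_even_part[OF M(1) reflection f(1,2)] by simp
    finally show "(\<integral>x. f x \<partial>sym_finite_dist \<mu> 3 r w) = (\<integral>x. f x \<partial>M)" .
  qed
qed

lemma L6_S_matches_L_S:
  assumes M_in: "M \<in> L_S t \<mu> \<sigma> lam" and "0 < \<sigma>"
  obtains G where "G \<in> L6_S t \<mu> \<sigma> lam"
    "(\<integral>x. (pos_part (x - t))\<^sup>2 \<partial>G) = (\<integral>x. (pos_part (x - t))\<^sup>2 \<partial>M)"
proof -
  from M_in have M: "real_dist M" "symmetric_dist M"
    and moments: "integrable M (\<lambda>x. x)" "integrable M (\<lambda>x. x\<^sup>2)"
    and mean: "(\<integral>x. x \<partial>M) = \<mu>" and second: "(\<integral>x. x\<^sup>2 \<partial>M) = \<mu>\<^sup>2 + \<sigma>\<^sup>2"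
    and shortfall: "(\<integral>x. neg_part (x - t) \<partial>M) \<le> lam"
    unfolding L_S_def by auto
  interpret real_distribution M using M(1) by (rule real_dist_imp_real_distribution)
  have neg_int: "integrable M (\<lambda>x. neg_part (x - t))"
  proof (rule Bochner_Integration.integrable_bound)
    show "integrable M (\<lambda>x. \<bar>x\<bar> + \<bar>t\<bar>)" using moments(1) by simp
    show "(\<lambda>x. neg_part (x - t)) \<in> borel_measurable M" unfolding neg_part_def by measurable
    show "AE x in M. norm (neg_part (x - t)) \<le> norm (\<bar>x\<bar> + \<bar>t\<bar>)"
      by (intro AE_I2) (auto simp: neg_part_def)
  qed
  have pos_int: "integrable M (\<lambda>x. (pos_part (x - t))\<^sup>2)"
  proof (rule Bochner_Integration.integrable_bound)
    show "integrable M (\<lambda>x. 2 * x\<^sup>2 + 2 * t\<^sup>2)" using moments(2) by simp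
    show "(\<lambda>x. (pos_part (x - t))\<^sup>2) \<in> borel_measurable M" unfolding pos_part_def by measurable
    have "(pos_part (x - t))\<^sup>2 \<le> 2 * x\<^sup>2 + 2 * t\<^sup>2" for x
      using sum_squares_ge_zero[of "x + t" 0]
      by (cases "t \<le> x") (auto simp: pos_part_def power2_eq_square algebra_simps)
    then show "AE x in M. norm ((pos_part (x - t))\<^sup>2) \<le> norm (2 * x\<^sup>2 + 2 * t\<^sup>2)"
      by (intro AE_I2) simp
  qed
  obtain w r where weights: "\<And>j. j < 3 \<Longrightarrow> 0 \<le> w j" "(\<Sum>j<3. w j) = 1"
    and matching: "\<And>f. f \<in> borel_measurable borel \<Longrightarrow> integrable M f \<Longrightarrow>
       split_quadratic \<bar>t - \<mu>\<bar> (even_part \<mu> f) \<Longrightarrow>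
       (\<integral>x. f x \<partial>sym_finite_dist \<mu> 3 r w) = (\<integral>x. f x \<partial>M)"
    by (rule symmetric_dist_six_point_matching[OF M moments mean abs_ge_zero[of "t - \<mu>"]]) blast
  define G where "G = sym_finite_dist \<mu> 3 r w"
  have split_id: "split_quadratic \<bar>t - \<mu>\<bar> (even_part \<mu> (\<lambda>x. x))"
    using split_quadratic_even_quadratic[of _ \<mu> 0] by (simp add: even_part_id)
  have "(\<integral>x. x \<partial>G) = (\<integral>x. x \<partial>M)"
    unfolding G_def by (rule matching[OF _ moments(1) split_id]) simp
  then have G_mean: "(\<integral>x. x \<partial>G) = \<mu>"
    using mean by simp
  have split_square: "split_quadratic \<bar>t - \<mu>\<bar> (even_part \<mu> (\<lambda>x. x\<^sup>2))"
    using split_quadratic_even_quadratic[of _ "\<mu>\<^sup>2" 1] by (simp add: even_part_square)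
  have "(\<integral>x. x\<^sup>2 \<partial>G) = (\<integral>x. x\<^sup>2 \<partial>M)"
    unfolding G_def by (rule matching[OF _ moments(2) split_square]) simp
  then have G_second: "(\<integral>x. x\<^sup>2 \<partial>G) = \<mu>\<^sup>2 + \<sigma>\<^sup>2"
    using second by simp
  have "(\<integral>x. neg_part (x - t) \<partial>G) = (\<integral>x. neg_part (x - t) \<partial>M)"
    unfolding G_def by (rule matching[OF _ neg_int split_quadratic_neg_part])
       (simp add: neg_part_def)
  then have G_shortfall: "(\<integral>x. neg_part (x - t) \<partial>G) \<le> lam"
    using shortfall by simp
  have G_objective: "(\<integral>x. (pos_part (x - t))\<^sup>2 \<partial>G) = (\<integral>x. (pos_part (x - t))\<^sup>2 \<partial>M)"
    unfolding G_def
    by (rule matching[OF _ pos_int split_quadratic_pos_part_square]) (simp add: pos_part_def)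
  have G_dist: "real_dist G" "symmetric_dist G"
    unfolding G_def
    by (rule real_dist_sym_finite_dist, rule symmetric_dist_sym_finite_dist[OF weights])
  have G_moments: "integrable G (\<lambda>x. x)" "integrable G (\<lambda>x. x\<^sup>2)"
    unfolding G_def by (simp_all add: integrable_sym_finite_dist[OF weights])
  have "k_point_dist (2 * 3) G"
    unfolding G_def
  proof (rule k_point_dist_sym_finite_dist[OF weights])
    show "measure (sym_finite_dist \<mu> 3 r w) {z} < 1" for z
      using singleton_measure_less_one[OF G_dist(1) G_moments] G_mean G_second \<open>0 < \<sigma>\<close>
      by (simp add: G_def)
  qed
  then have "G \<in> L6_S t \<mu> \<sigma> lam"
    using G_dist G_moments G_mean G_second G_shortfall by (simp add: L6_S_def L_S_def)
  then show ?thesis using G_objective by (rule that)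
qed

theorem lemma2:
  fixes t \<mu> \<sigma> lam :: real
  assumes "\<mu> > 0" and "\<sigma> > 0" and "lam > neg_part (\<mu> - t)"
  shows "(SUP M \<in> L_S t \<mu> \<sigma> lam. ereal (\<integral>x. (pos_part (x - t)) ^ 2 \<partial>M))
       = (SUP M \<in> L6_S t \<mu> \<sigma> lam. ereal (\<integral>x. (pos_part (x - t)) ^ 2 \<partial>M))"
proof (rule antisym)
  show "(SUP M \<in> L_S t \<mu> \<sigma> lam. ereal (\<integral>x. (pos_part (x - t)) ^ 2 \<partial>M))
      \<le> (SUP M \<in> L6_S t \<mu> \<sigma> lam. ereal (\<integral>x. (pos_part (x - t)) ^ 2 \<partial>M))"
  proof (rule SUP_least)
    fix M assume "M \<in> L_S t \<mu> \<sigma> lam"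
    then obtain G where "G \<in> L6_S t \<mu> \<sigma> lam"
      and "(\<integral>x. (pos_part (x - t))\<^sup>2 \<partial>G) = (\<integral>x. (pos_part (x - t))\<^sup>2 \<partial>M)"
      using L6_S_matches_L_S \<open>\<sigma> > 0\<close> by blast
    then show "ereal (\<integral>x. (pos_part (x - t))\<^sup>2 \<partial>M)
        \<le> (SUP M \<in> L6_S t \<mu> \<sigma> lam. ereal (\<integral>x. (pos_part (x - t)) ^ 2 \<partial>M))"
      by (metis SUP_upper)
  qed
  show "(SUP M \<in> L6_S t \<mu> \<sigma> lam. ereal (\<integral>x. (pos_part (x - t)) ^ 2 \<partial>M))
      \<le> (SUP M \<in> L_S t \<mu> \<sigma> lam. ereal (\<integral>x. (pos_part (x - t)) ^ 2 \<partial>M))"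
    by (rule SUP_subset_mono) (auto simp: L6_S_def)
qed

end
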